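(* Let $d, s, t, \ell$ be integers with $s\ge 1$, $\ell\ge 0$, $d \geq 3t-5$ and $t \geq \max\{5, \ell+4\}$. Then: (1) if ($s = 2$ and $t \geq 6$) or ($s \geq 3$ and $t \geq 7$), every edge-coloring of $W_d(s)$ using at least $\left\lfloor \frac{(s+1)t-(3s+4)}{t-3} d \right\rfloor + 1$ colors contains a rainbow $F_t$, i.e., \[ \mathrm{rb}(W_d(s), F_t) \le \left\lfloor \frac{(s+1)t-(3s+4)}{t-3}\, d \right\rfloor + 1; \] (2) for every $\theta_{t,\ell}\in\Theta_{t,\ell}$, every edge-coloring of $W_d$ using at least $\left\lfloor \frac{2t-7}{t-3} d \right\rfloor + 1$ colors contains a rainbow $\theta_{t,\ell}$, i.e., \[ \mathrm{rb}(W_d, \theta_{t,\ell}) \le \left\lfloor \frac{2t-7}{t-3}\, d \right\rfloor + 1 . \]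
   Context: A subgraph of an edge-colored graph is rainbow if no two of its edges have the same color. For graphs $G$ and $H$, the rainbow number $\mathrm{rb}(G,H)$ is the minimum integer $k$ such that every edge-coloring of $G$ that uses at least $k$ distinct colors contains a rainbow subgraph isomorphic to $H$. For $d \ge 3$ and $s \ge 1$, $W_d(s) = \overline{K_s} + C_d$: hub vertices $u_1,\dots,u_s$, pairwise non-adjacent, each adjacent to every vertex of a cycle $v_1v_2\cdots v_dv_1$; $W_d := W_d(1)$. The fan $F_t$ is obtained from a cycle $v_1v_2\cdots v_tv_1$ by adding all chords $v_1v_i$, $3 \le i \le t-1$. For $0 \le \ell \le t-3$, $\Theta_{t,\ell}$ is the class of graphs obtained from a cycle $v_1v_2\cdots v_tv_1$ by adding exactly $\ell$ chords, each from $\{v_1v_i : 3 \le i \le t-1\}$. *)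

theory Defs
  imports Complex_Main
begin

text \<open>Simple graphs are represented by their edge sets: an edge is a two-element
  set of vertices.\<close>

definition gwheel_edges :: "nat \<Rightarrow> nat \<Rightarrow> (nat + nat) set set" where
  "gwheel_edges d s =
     {{Inl i, Inr j} | i j. i < s \<and> j < d} \<union>
     {{Inr j, Inr ((j + 1) mod d)} | j. j < d}"

text \<open>Cycle v_1 ... v_t v_1 on vertices 0..t-1 (vertex v_i is i-1).\<close>
definition cycle_edges :: "nat \<Rightarrow> nat set set" where
  "cycle_edges t = {{i, (i + 1) mod t} | i. i < t}"

text \<open>Possible chords v_1 v_i, 3 \<le> i \<le> t-1, i.e. {0, i-1}.\<close>
definition fan_chords :: "nat \<Rightarrow> nat set set" where
  "fan_chords t = {{0, i} | i. 2 \<le> i \<and> i \<le> t - 2}"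

definition fan_edges :: "nat \<Rightarrow> nat set set" where
  "fan_edges t = cycle_edges t \<union> fan_chords t"

definition Theta_class :: "nat \<Rightarrow> nat \<Rightarrow> nat set set set" where
  "Theta_class t l = {cycle_edges t \<union> C | C. C \<subseteq> fan_chords t \<and> card C = l}"

definition has_rainbow_copy ::
  "'a set set \<Rightarrow> ('a set \<Rightarrow> 'c) \<Rightarrow> 'b set \<Rightarrow> 'b set set \<Rightarrow> bool" where
  "has_rainbow_copy E c VH EH \<longleftrightarrow>
     (\<exists>f. inj_on f VH \<and> (\<forall>e\<in>EH. f ` e \<in> E) \<and> inj_on (\<lambda>e. c (f ` e)) EH)"

end

theory Submission
  imports Defs
begin

text \<open>Suppose an edge-colouring of \<open>W\<^sub>d(s)\<close> with \<open>k\<close> colours has no rainbow copy of a graph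
  \<open>H\<close> consisting of the cycle \<open>v\<^sub>1 \<dots> v\<^sub>t\<close> and some chords at \<open>v\<^sub>1\<close>. For every hub \<open>h\<close> and rim
  vertex \<open>p\<close> there is a copy of \<open>H\<close>, a window, sending \<open>v\<^sub>1\<close> to \<open>h\<close> and the path \<open>v\<^sub>2 \<dots> v\<^sub>t\<close> to
  the rim path starting at \<open>p\<close>; each of these \<open>s d\<close> windows contains two edges of equal colour.
  An edge lies in at most \<open>s (t - 2)\<close> windows and two edges lie in at most \<open>s (t - 3)\<close> common
  windows, so by double counting a colour class of \<open>m\<close> edges accounts for at most
  \<open>s (t - 3) (m - 1)\<close> windows. Summing over the classes gives \<open>s d \<le> s (t - 3) (|E| - k)\<close>, and
  \<open>|E| = (s + 1) d\<close> yields the bound on \<open>k\<close>. The hypothesis \<open>d \<ge> 3 t - 5\<close> is used only in the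
  form \<open>d \<ge> 2 t\<close>.\<close>

lemma card_windows_meeting_class_twice_le:
  fixes W :: "'i \<Rightarrow> 'e set" and \<mu> \<nu> :: nat
  assumes "finite I" and "finite C"
    and cover: "\<And>e. e \<in> C \<Longrightarrow> card {i\<in>I. e \<in> W i} \<le> \<mu>"
    and pair: "\<And>e e'. e \<in> C \<Longrightarrow> e' \<in> C \<Longrightarrow> e \<noteq> e' \<Longrightarrow> card {i\<in>I. e \<in> W i \<and> e' \<in> W i} \<le> \<nu>"
    and \<mu>\<nu>: "3 * \<mu> \<le> 4 * \<nu> + 1" "\<mu> \<le> 2 * \<nu>"
  shows "card {i\<in>I. 2 \<le> card (W i \<inter> C)} \<le> \<nu> * (card C - 1)"
proof -
  let ?K = "{i\<in>I. 2 \<le> card (W i \<inter> C)}"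
  consider "card C \<le> 1" | "card C = 2" | "3 \<le> card C" by linarith
  then show ?thesis
  proof cases
    case 1
    have "\<not> 2 \<le> card (W i \<inter> C)" for i
      using card_mono[OF \<open>finite C\<close>, of "W i \<inter> C"] 1 by auto
    then show ?thesis by simp
  next
    case 2
    then obtain x y where C: "C = {x, y}" "x \<noteq> y" by (auto simp: card_Suc_eq numeral_2_eq_2)
    have "?K \<subseteq> {i\<in>I. x \<in> W i \<and> y \<in> W i}"
    proof safe
      fix i assume "i \<in> I" "2 \<le> card (W i \<inter> C)"
      then have "W i \<inter> C = C"
        using card_subset_eq[OF \<open>finite C\<close>, of "W i \<inter> C"] card_mono[OF \<open>finite C\<close>, of "W i \<inter> C"] 2
        by auto
      then show "x \<in> W i" "y \<in> W i" using C by auto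
    qed
    then have "card ?K \<le> card {i\<in>I. x \<in> W i \<and> y \<in> W i}"
      by (intro card_mono) (use \<open>finite I\<close> in auto)
    also have "\<dots> \<le> \<nu>" using pair C by auto
    finally show ?thesis using 2 by simp
  next
    case 3
    have "\<mu> * card C \<le> 2 * \<nu> * (card C - 1) + 1"
    proof -
      obtain m where m: "card C = m + 3" using 3 by (metis add.commute le_Suc_ex)
      then have "\<mu> * card C = \<mu> * m + 3 * \<mu>" by (simp add: algebra_simps)
      also have "\<dots> \<le> 2 * \<nu> * m + (4 * \<nu> + 1)" using \<mu>\<nu> by (intro add_mono) simp_all
      also have "\<dots> = 2 * \<nu> * (card C - 1) + 1" using m by (simp add: algebra_simps)
      finally show ?thesis .
    qed
    have "2 * card ?K = (\<Sum>i\<in>?K. 2)" by simp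
    also have "\<dots> \<le> (\<Sum>i\<in>?K. card (W i \<inter> C))" by (rule sum_mono) simp
    also have "\<dots> \<le> (\<Sum>i\<in>I. card (W i \<inter> C))" by (rule sum_mono2) (use \<open>finite I\<close> in auto)
    also have "\<dots> = (\<Sum>i\<in>I. card {e\<in>C. e \<in> W i})" by (intro sum.cong) (auto intro: arg_cong[of _ _ card])
    also have "\<dots> = (\<Sum>e\<in>C. card {i\<in>I. e \<in> W i})"
      by (rule sum_multicount_gen) (use assms(1,2) in auto)
    also have "\<dots> \<le> \<mu> * card C"
      using sum_mono[of C "\<lambda>e. card {i\<in>I. e \<in> W i}" "\<lambda>_. \<mu>"] cover by (simp add: mult.commute)
    also have "\<dots> \<le> 2 * \<nu> * (card C - 1) + 1" by fact
    finally show ?thesis by linarith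
  qed
qed

lemma card_non_injective_windows_le:
  fixes W :: "'i \<Rightarrow> 'e set" and c :: "'e \<Rightarrow> 'c" and \<mu> \<nu> :: nat
  assumes "finite I" and "finite E"
    and sub: "\<And>i. i \<in> I \<Longrightarrow> W i \<subseteq> E"
    and non_inj: "\<And>i. i \<in> I \<Longrightarrow> \<not> inj_on c (W i)"
    and cover: "\<And>e. e \<in> E \<Longrightarrow> card {i\<in>I. e \<in> W i} \<le> \<mu>"
    and pair: "\<And>e e'. e \<in> E \<Longrightarrow> e' \<in> E \<Longrightarrow> e \<noteq> e' \<Longrightarrow> card {i\<in>I. e \<in> W i \<and> e' \<in> W i} \<le> \<nu>"
    and \<mu>\<nu>: "3 * \<mu> \<le> 4 * \<nu> + 1" "\<mu> \<le> 2 * \<nu>"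
  shows "card I \<le> \<nu> * (card E - card (c ` E))"
proof -
  define C where "C v = {e\<in>E. c e = v}" for v
  define K where "K v = {i\<in>I. 2 \<le> card (W i \<inter> C v)}" for v
  have finite_C: "finite (C v)" for v using \<open>finite E\<close> by (simp add: C_def)
  have "I \<subseteq> (\<Union>v\<in>c ` E. K v)"
  proof
    fix i assume "i \<in> I"
    then obtain x y where xy: "x \<in> W i" "y \<in> W i" "x \<noteq> y" "c x = c y"
      using non_inj unfolding inj_on_def by blast
    with sub \<open>i \<in> I\<close> have "{x, y} \<subseteq> W i \<inter> C (c x)" by (auto simp: C_def)
    then have "2 \<le> card (W i \<inter> C (c x))"
      using card_mono[OF _ \<open>{x, y} \<subseteq> _\<close>] finite_C xy(3) by auto
    then show "i \<in> (\<Union>v\<in>c ` E. K v)" using \<open>i \<in> I\<close> xy(1) sub by (auto simp: K_def)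
  qed
  then have "card I \<le> card (\<Union>v\<in>c ` E. K v)"
    by (rule card_mono[rotated]) (simp add: K_def \<open>finite E\<close> \<open>finite I\<close>)
  also have "\<dots> \<le> (\<Sum>v\<in>c ` E. card (K v))" by (rule card_UN_le) (use \<open>finite E\<close> in auto)
  also have "\<dots> \<le> (\<Sum>v\<in>c ` E. \<nu> * (card (C v) - 1))"
    unfolding K_def
    by (intro sum_mono card_windows_meeting_class_twice_le[OF \<open>finite I\<close> finite_C _ _ \<mu>\<nu>])
       (auto simp: C_def intro: cover pair)
  also have "\<dots> = \<nu> * (\<Sum>v\<in>c ` E. card (C v) - 1)" by (simp add: sum_distrib_left)
  also have "(\<Sum>v\<in>c ` E. card (C v) - 1) = (\<Sum>v\<in>c ` E. card (C v)) - card (c ` E)"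
    using finite_C by (subst sum_subtractf_nat) (auto simp: C_def card_gt_0_iff Suc_le_eq)
  also have "(\<Sum>v\<in>c ` E. card (C v)) = card E"
    using sum.group[OF \<open>finite E\<close> finite_imageI[OF \<open>finite E\<close>] subset_refl, where g = c and h = "\<lambda>_. 1 :: nat"]
    by (simp add: C_def)
  finally show ?thesis .
qed

lemma add_mod_cancel_less:
  fixes d p j j' :: nat
  assumes "(p + j) mod d = (p + j') mod d" and "j < d" and "j' < d"
  shows "j = j'"
proof -
  have "int (p + j) mod int d = int (p + j') mod int d"
    using assms(1) by (metis of_nat_mod)
  then have "(int (p + j) - int p) mod int d = (int (p + j') - int p) mod int d"
    by (rule mod_diff_cong) simp
  then show ?thesis using assms(2,3) by simp
qed

lemma add_mod_sub_cancel:
  fixes d p j :: nat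
  assumes "p < d" and "j \<le> d"
  shows "((p + j) mod d + d - j) mod d = p"
proof -
  have "((p + j) mod d + (d - j)) mod d = (p + j + (d - j)) mod d" by (rule mod_add_left_eq)
  also have "p + j + (d - j) = p + d" using assms(2) by simp
  finally show ?thesis using assms by simp
qed

lemma mod_offsets_shift:
  fixes d y j j' k :: nat
  assumes "(y + j) mod d = ((y + d - k) mod d + j') mod d"
    and "k \<le> d" and "j + k < d" and "j' < d"
  shows "j + k = j'"
proof (rule add_mod_cancel_less[of y])
  have "(y + (j + k)) mod d = ((y + j) mod d + k) mod d" by (simp add: mod_add_left_eq add.assoc)
  also have "\<dots> = (((y + d - k) mod d + j') mod d + k) mod d" by (simp only: assms(1))
  also have "\<dots> = (y + d - k + (j' + k)) mod d" by (simp add: mod_add_left_eq add.assoc)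
  also have "y + d - k + (j' + k) = y + j' + d" using assms(2) by simp
  also have "(y + j' + d) mod d = (y + j') mod d" by simp
  finally show "(y + (j + k)) mod d = (y + j') mod d" .
qed (use assms in auto)

abbreviation spoke :: "nat \<Rightarrow> nat \<Rightarrow> (nat + nat) set" where
  "spoke h y \<equiv> {Inl h, Inr y}"

abbreviation rim_edge :: "nat \<Rightarrow> nat \<Rightarrow> (nat + nat) set" where
  "rim_edge d a \<equiv> {Inr a, Inr ((a + 1) mod d)}"

lemma gwheel_edges_eq:
  "gwheel_edges d s = (\<lambda>(h, y). spoke h y) ` ({..<s} \<times> {..<d}) \<union> rim_edge d ` {..<d}"
  unfolding gwheel_edges_def by auto

lemma finite_gwheel_edges: "finite (gwheel_edges d s)"
  by (simp add: gwheel_edges_eq)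

lemma card_gwheel_edges_le: "card (gwheel_edges d s) \<le> (s + 1) * d"
proof -
  have "card (gwheel_edges d s) \<le> card ({..<s} \<times> {..<d}) + card {..<d}"
    unfolding gwheel_edges_eq by (intro card_Un_le[THEN order_trans] add_mono card_image_le) auto
  then show ?thesis by (simp add: card_cartesian_product)
qed

lemma gwheel_edge_cases:
  assumes "e \<in> gwheel_edges d s"
  obtains h y where "h < s" "y < d" "e = spoke h y"
    | a where "a < d" "e = rim_edge d a"
  using assms unfolding gwheel_edges_def by blast

lemma rim_edge_inj:
  assumes "3 \<le> d" "a < d" "b < d" "rim_edge d a = rim_edge d b"
  shows "a = b"
proof (rule ccontr)
  assume "a \<noteq> b"
  then have "a = (b + 1) mod d" "b = (a + 1) mod d" using assms(4) by (auto simp: doubleton_eq_iff)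
  then have "(a + 0) mod d = (a + 2) mod d" using assms(2) by (simp add: mod_Suc_eq)
  then show False using add_mod_cancel_less[of a 0 d 2] assms(1) by simp
qed

text \<open>The window at \<open>(h, p)\<close> maps vertex \<open>0\<close> of the cycle with chords \<open>Ch\<close> to the hub \<open>h\<close> and
  vertex \<open>i > 0\<close> to the rim vertex \<open>p + i - 1\<close>; its spokes end at the rim vertices \<open>p + j\<close> with
  \<open>j \<in> spoke_offsets t Ch\<close>, the chord \<open>{0, j + 1}\<close> giving offset \<open>j\<close>.\<close>

fun fan_embedding :: "nat \<Rightarrow> nat \<times> nat \<Rightarrow> nat \<Rightarrow> nat + nat" where
  "fan_embedding d (h, p) i = (if i = 0 then Inl h else Inr ((p + i - 1) mod d))"

definition window :: "nat \<Rightarrow> nat \<Rightarrow> nat set set \<Rightarrow> nat \<times> nat \<Rightarrow> (nat + nat) set set" where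
  "window d t Ch hp = (\<lambda>e. fan_embedding d hp ` e) ` (cycle_edges t \<union> Ch)"

definition spoke_offsets :: "nat \<Rightarrow> nat set set \<Rightarrow> nat set" where
  "spoke_offsets t Ch = {j. j \<le> t - 2 \<and> (j = 0 \<or> j = t - 2 \<or> {0, j + 1} \<in> Ch)}"

lemma spoke_offsets_subset: "spoke_offsets t Ch \<subseteq> {..t - 2}"
  by (auto simp: spoke_offsets_def)

lemma finite_spoke_offsets: "finite (spoke_offsets t Ch)"
  using finite_subset[OF spoke_offsets_subset] by blast

lemma card_spoke_offsets_le: "2 \<le> t \<Longrightarrow> card (spoke_offsets t Ch) \<le> t - 1"
  using card_mono[OF _ spoke_offsets_subset, of t Ch] by simp

lemma card_spoke_offsets_remove_chord_le:
  assumes "3 \<le> t" and "ch \<in> fan_chords t"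
  shows "card (spoke_offsets t (Ch - {ch})) \<le> t - 2"
proof -
  obtain i where i: "ch = {0, i}" "2 \<le> i" "i \<le> t - 2"
    using assms(2) unfolding fan_chords_def by blast
  have "spoke_offsets t (Ch - {ch}) \<subseteq> {..t - 2} - {i - 1}"
    using i assms(1) by (auto simp: spoke_offsets_def)
  then have "card (spoke_offsets t (Ch - {ch})) \<le> card ({..t - 2} - {i - 1})"
    by (rule card_mono[rotated]) simp
  also have "\<dots> = t - 2" using i assms(1) by simp
  finally show ?thesis .
qed

lemma window_cases:
  assumes "3 \<le> t" and "Ch \<subseteq> fan_chords t" and "x \<in> window d t Ch (h, p)"
  obtains j where "j \<le> t - 3" "x = rim_edge d ((p + j) mod d)"
    | j where "j \<in> spoke_offsets t Ch" "x = spoke h ((p + j) mod d)"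
proof -
  obtain e where e: "e \<in> cycle_edges t \<union> Ch" and x: "x = fan_embedding d (h, p) ` e"
    using assms(3) unfolding window_def by auto
  show thesis
  proof (cases "e \<in> Ch")
    case True
    then obtain i where "e = {0, i}" "2 \<le> i" "i \<le> t - 2"
      using assms(2) unfolding fan_chords_def by auto
    then show thesis
      using that(2)[of "i - 1"] True x by (auto simp: spoke_offsets_def insert_commute)
  next
    case False
    then obtain i where i: "e = {i, (i + 1) mod t}" "i < t" using e unfolding cycle_edges_def by auto
    consider "i = 0" | "i = t - 1" | "1 \<le> i" "i \<le> t - 2" using i assms(1) by linarith
    then show thesis
    proof cases
      case 1
      then show thesis
        using that(2)[of 0] i x assms(1) by (auto simp: spoke_offsets_def insert_commute)
    next
      case 2
      then have "e = {t - 1, 0}" using i assms(1) by auto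
      moreover have "p + (t - 1) - 1 = p + (t - 2)" using assms(1) by simp
      ultimately show thesis
        using that(2)[of "t - 2"] x assms(1) by (auto simp: spoke_offsets_def)
    next
      case 3
      then have "x = {Inr ((p + (i - 1)) mod d), Inr ((p + i) mod d)}" using i x by auto
      moreover have "(p + i) mod d = ((p + (i - 1)) mod d + 1) mod d"
        using 3 by (simp add: mod_Suc_eq)
      ultimately show thesis using that(1)[of "i - 1"] 3 by auto
    qed
  qed
qed

lemma window_subset_gwheel_edges:
  assumes "3 \<le> t" and "Ch \<subseteq> fan_chords t" and "h < s" and "0 < d"
  shows "window d t Ch (h, p) \<subseteq> gwheel_edges d s"
proof
  fix x assume "x \<in> window d t Ch (h, p)"
  then show "x \<in> gwheel_edges d s"
  proof (rule window_cases[OF assms(1,2)])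
    fix j assume "x = rim_edge d ((p + j) mod d)"
    moreover have "(p + j) mod d < d" using assms(4) by simp
    ultimately show ?thesis unfolding gwheel_edges_def by blast
  next
    fix j assume "x = spoke h ((p + j) mod d)"
    moreover have "(p + j) mod d < d" using assms(4) by simp
    ultimately show ?thesis unfolding gwheel_edges_def using assms(3) by blast
  qed
qed

lemma inj_on_fan_embedding:
  assumes "t \<le> d + 1"
  shows "inj_on (fan_embedding d (h, p)) {0..<t}"
proof
  fix i i' assume "i \<in> {0..<t}" "i' \<in> {0..<t}"
    and eq: "fan_embedding d (h, p) i = fan_embedding d (h, p) i'"
  then have "i < t" "i' < t" by simp_all
  show "i = i'"
  proof (cases "i = 0 \<or> i' = 0")
    case True
    then show ?thesis using eq by (auto split: if_splits)
  next
    case False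
    then have "(p + (i - 1)) mod d = (p + (i' - 1)) mod d" using eq by simp
    moreover have "i - 1 < d" "i' - 1 < d" using \<open>i < t\<close> \<open>i' < t\<close> False assms by linarith+
    ultimately have "i - 1 = i' - 1" by (rule add_mod_cancel_less)
    then show ?thesis using False by linarith
  qed
qed

lemma has_rainbow_copy_if_inj_on_window:
  assumes "3 \<le> t" and "t \<le> d" and "Ch \<subseteq> fan_chords t" and "h < s"
    and "inj_on c (window d t Ch (h, p))"
  shows "has_rainbow_copy (gwheel_edges d s) c {0..<t} (cycle_edges t \<union> Ch)"
  unfolding has_rainbow_copy_def
proof (intro exI conjI ballI)
  let ?f = "fan_embedding d (h, p)"
  show inj: "inj_on ?f {0..<t}" by (rule inj_on_fan_embedding) (use assms(2) in simp)
  show "?f ` e \<in> gwheel_edges d s" if "e \<in> cycle_edges t \<union> Ch" for e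
  proof -
    have "?f ` e \<in> window d t Ch (h, p)" unfolding window_def using that by (rule imageI)
    moreover have "0 < d" using assms(1,2) by simp
    ultimately show ?thesis using window_subset_gwheel_edges[OF assms(1,3,4)] by blast
  qed
  have "inj_on ((`) ?f) (cycle_edges t \<union> Ch)"
  proof (rule inj_onI)
    fix e e' assume "e \<in> cycle_edges t \<union> Ch" "e' \<in> cycle_edges t \<union> Ch" "?f ` e = ?f ` e'"
    moreover from calculation(1,2) have "e \<subseteq> {0..<t}" "e' \<subseteq> {0..<t}"
      using assms(3) by (auto simp: cycle_edges_def fan_chords_def)
    ultimately show "e = e'" using inj_on_image_eq_iff[OF inj] by blast
  qed
  from comp_inj_on[OF this] show "inj_on (\<lambda>e. c (?f ` e)) (cycle_edges t \<union> Ch)"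
    using assms(5) by (simp add: window_def o_def)
qed

lemma spoke_in_windowD:
  assumes "3 \<le> t" and "t \<le> d" and "Ch \<subseteq> fan_chords t" and "p < d"
    and "spoke h' y \<in> window d t Ch (h, p)"
  shows "h = h' \<and> (\<exists>j\<in>spoke_offsets t Ch. y = (p + j) mod d \<and> p = (y + d - j) mod d)"
proof -
  obtain j where "j \<in> spoke_offsets t Ch" "spoke h' y = spoke h ((p + j) mod d)"
    by (rule window_cases[OF assms(1,3,5)]) (auto simp: doubleton_eq_iff)
  moreover have "j \<le> d" using calculation(1) spoke_offsets_subset assms(2) by fastforce
  ultimately show ?thesis using add_mod_sub_cancel[OF assms(4)] by (auto simp: doubleton_eq_iff)
qed

lemma rim_edge_in_windowD:
  assumes "3 \<le> t" and "t \<le> d" and "Ch \<subseteq> fan_chords t" and "p < d" and "a < d"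
    and "rim_edge d a \<in> window d t Ch (h, p)"
  shows "\<exists>j\<le>t - 3. a = (p + j) mod d \<and> p = (a + d - j) mod d"
proof -
  obtain j where "j \<le> t - 3" "rim_edge d a = rim_edge d ((p + j) mod d)"
    by (rule window_cases[OF assms(1,3,6)]) (auto simp: doubleton_eq_iff)
  moreover from this have "a = (p + j) mod d"
    using rim_edge_inj[of d a "(p + j) mod d"] assms(1,2,5) by simp
  ultimately show ?thesis using add_mod_sub_cancel[OF assms(4), of j] assms(2) by auto
qed

lemma card_windows_containing_spoke_le:
  assumes "3 \<le> t" and "t \<le> d" and "Ch \<subseteq> fan_chords t"
  shows "card {i\<in>{..<s} \<times> {..<d}. spoke h y \<in> window d t Ch i} \<le> card (spoke_offsets t Ch)"
proof -
  have "{i\<in>{..<s} \<times> {..<d}. spoke h y \<in> window d t Ch i}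
      \<subseteq> {h} \<times> (\<lambda>j. (y + d - j) mod d) ` spoke_offsets t Ch" (is "_ \<subseteq> ?B")
    using spoke_in_windowD[OF assms] by fastforce
  then have "card {i\<in>{..<s} \<times> {..<d}. spoke h y \<in> window d t Ch i} \<le> card ?B"
    by (intro card_mono) (simp_all add: finite_spoke_offsets)
  also have "\<dots> \<le> card (spoke_offsets t Ch)"
    by (simp add: card_cartesian_product card_image_le finite_spoke_offsets)
  finally show ?thesis .
qed

lemma card_windows_containing_rim_edge_le:
  assumes "3 \<le> t" and "t \<le> d" and "Ch \<subseteq> fan_chords t" and "a < d"
  shows "card {i\<in>{..<s} \<times> {..<d}. rim_edge d a \<in> window d t Ch i} \<le> s * (t - 2)"
proof -
  have "{i\<in>{..<s} \<times> {..<d}. rim_edge d a \<in> window d t Ch i}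
      \<subseteq> {..<s} \<times> (\<lambda>j. (a + d - j) mod d) ` {..t - 3}" (is "_ \<subseteq> ?B")
    using rim_edge_in_windowD[OF assms(1-3) _ assms(4)] by fastforce
  then have "card {i\<in>{..<s} \<times> {..<d}. rim_edge d a \<in> window d t Ch i} \<le> card ?B"
    by (intro card_mono) simp_all
  also have "\<dots> \<le> s * card {..t - 3}"
    unfolding card_cartesian_product card_lessThan by (intro mult_le_mono2 card_image_le) simp
  also have "\<dots> = s * (t - 2)"
  proof -
    have "Suc (t - 3) = t - 2" using assms(1) by linarith
    then show ?thesis by simp
  qed
  finally show ?thesis .
qed

text \<open>The windows starting at \<open>y\<close> and at \<open>y - (t - 2)\<close> both contain the spoke to \<open>y\<close>, as their
  first and as their last spoke; their rim paths meet only in \<open>y\<close>, so they share no other edge.\<close>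

lemma extreme_windows_through_spoke:
  assumes "3 \<le> t" and "2 * t \<le> d" and "Ch \<subseteq> fan_chords t" and "y < d"
    and "e \<in> gwheel_edges d s" and "e \<noteq> spoke h y"
  shows "e \<notin> window d t Ch (h, y) \<or> e \<notin> window d t Ch (h, (y + d - (t - 2)) mod d)"
proof (rule ccontr)
  let ?q = "(y + d - (t - 2)) mod d"
  assume "\<not> ?thesis"
  then have e: "e \<in> window d t Ch (h, y)" "e \<in> window d t Ch (h, ?q)" by simp_all
  have "t \<le> d" "?q < d" using assms(1,2) by simp_all
  from assms(5) show False
  proof (cases rule: gwheel_edge_cases)
    case (1 h' y')
    with e spoke_in_windowD[OF assms(1) \<open>t \<le> d\<close> assms(3)] assms(4) \<open>?q < d\<close>
    obtain j j' where "j \<in> spoke_offsets t Ch" "j' \<in> spoke_offsets t Ch" "h' = h"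
      "y' = (y + j) mod d" "y' = (?q + j') mod d"
      by metis
    moreover from this have "j + (t - 2) = j'"
      using spoke_offsets_subset assms(1,2) by (intro mod_offsets_shift[of y j d "t - 2" j']) fastforce+
    ultimately show False using 1 assms(4,6) spoke_offsets_subset by fastforce
  next
    case (2 b)
    with e rim_edge_in_windowD[OF assms(1) \<open>t \<le> d\<close> assms(3)] assms(4) \<open>?q < d\<close>
    obtain j j' where "j \<le> t - 3" "j' \<le> t - 3" "b = (y + j) mod d" "b = (?q + j') mod d"
      by metis
    moreover from this have "j + (t - 2) = j'"
      using assms(1,2) by (intro mod_offsets_shift[of y j d "t - 2" j']) auto
    ultimately show False using assms(1) by linarith
  qed
qed

lemma card_windows_containing_spoke_and_edge_le:
  assumes "3 \<le> t" and "2 * t \<le> d" and "Ch \<subseteq> fan_chords t" and "y < d"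
    and "e \<in> gwheel_edges d s" and "e \<noteq> spoke h y"
  shows "card {i\<in>{..<s} \<times> {..<d}. spoke h y \<in> window d t Ch i \<and> e \<in> window d t Ch i}
    \<le> card (spoke_offsets t Ch) - 1"
proof -
  define start where "start j = (y + d - j) mod d" for j
  have "t \<le> d" using assms(2) by simp
  obtain j\<^sub>0 where j\<^sub>0: "j\<^sub>0 \<in> spoke_offsets t Ch" "e \<notin> window d t Ch (h, start j\<^sub>0)"
  proof -
    have "0 \<in> spoke_offsets t Ch" "t - 2 \<in> spoke_offsets t Ch" by (simp_all add: spoke_offsets_def)
    moreover have "start 0 = y" using assms(4) by (simp add: start_def)
    ultimately show thesis
      using that extreme_windows_through_spoke[OF assms] unfolding start_def by metis
  qed
  have "{i\<in>{..<s} \<times> {..<d}. spoke h y \<in> window d t Ch i \<and> e \<in> window d t Ch i}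
      \<subseteq> {h} \<times> start ` (spoke_offsets t Ch - {j\<^sub>0})" (is "_ \<subseteq> ?B")
    using spoke_in_windowD[OF assms(1) \<open>t \<le> d\<close> assms(3)] j\<^sub>0(2) by (fastforce simp: start_def)
  then have "card {i\<in>{..<s} \<times> {..<d}. spoke h y \<in> window d t Ch i \<and> e \<in> window d t Ch i}
      \<le> card ?B"
    by (intro card_mono) (simp_all add: finite_spoke_offsets)
  also have "\<dots> \<le> card (spoke_offsets t Ch) - 1"
    using card_image_le[of "spoke_offsets t Ch - {j\<^sub>0}" start] j\<^sub>0(1)
    by (simp add: card_cartesian_product finite_spoke_offsets)
  finally show ?thesis .
qed

text \<open>Similarly, the rim paths of windows starting at \<open>a\<close> and at \<open>a - (t - 3)\<close> share only the
  rim edge at \<open>a\<close>.\<close>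

lemma extreme_windows_through_rim_edge:
  assumes "3 \<le> t" and "2 * t \<le> d" and "Ch \<subseteq> fan_chords t" and "a < d" and "b < d"
    and "a \<noteq> b"
  shows "(\<forall>h. rim_edge d b \<notin> window d t Ch (h, a))
    \<or> (\<forall>h. rim_edge d b \<notin> window d t Ch (h, (a + d - (t - 3)) mod d))"
proof (rule ccontr)
  let ?q = "(a + d - (t - 3)) mod d"
  assume "\<not> ?thesis"
  then obtain h h' where "rim_edge d b \<in> window d t Ch (h, a)" "rim_edge d b \<in> window d t Ch (h', ?q)"
    by blast
  moreover have "t \<le> d" "?q < d" using assms(1,2) by simp_all
  ultimately obtain j j' where "j \<le> t - 3" "j' \<le> t - 3" "b = (a + j) mod d" "b = (?q + j') mod d"
    using rim_edge_in_windowD[OF assms(1) _ assms(3)] assms(4,5) by metis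
  moreover from this have "j + (t - 3) = j'"
    using assms(1,2) by (intro mod_offsets_shift[of a j d "t - 3" j']) auto
  ultimately show False using assms(4,6) by simp
qed

lemma card_windows_containing_two_rim_edges_le:
  assumes "3 \<le> t" and "2 * t \<le> d" and "Ch \<subseteq> fan_chords t" and "a < d" and "b < d"
    and "a \<noteq> b"
  shows "card {i\<in>{..<s} \<times> {..<d}. rim_edge d a \<in> window d t Ch i \<and> rim_edge d b \<in> window d t Ch i}
    \<le> s * (t - 3)"
proof -
  define start where "start j = (a + d - j) mod d" for j
  have "t \<le> d" using assms(2) by simp
  obtain j\<^sub>0 where j\<^sub>0: "j\<^sub>0 \<le> t - 3" "\<And>h. rim_edge d b \<notin> window d t Ch (h, start j\<^sub>0)"
  proof -
    have "start 0 = a" using assms(4) by (simp add: start_def)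
    then show thesis
      using that[of 0] that[of "t - 3"] extreme_windows_through_rim_edge[OF assms]
      unfolding start_def by auto
  qed
  have "{i\<in>{..<s} \<times> {..<d}. rim_edge d a \<in> window d t Ch i \<and> rim_edge d b \<in> window d t Ch i}
      \<subseteq> {..<s} \<times> start ` ({..t - 3} - {j\<^sub>0})" (is "_ \<subseteq> ?B")
    using rim_edge_in_windowD[OF assms(1) \<open>t \<le> d\<close> assms(3) _ assms(4)] j\<^sub>0(2)
    by (fastforce simp: start_def)
  then have "card {i\<in>{..<s} \<times> {..<d}. rim_edge d a \<in> window d t Ch i \<and> rim_edge d b \<in> window d t Ch i}
      \<le> card ?B"
    by (intro card_mono) simp_all
  also have "\<dots> \<le> s * card ({..t - 3} - {j\<^sub>0})"
    unfolding card_cartesian_product card_lessThan by (intro mult_le_mono2 card_image_le) simp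
  also have "\<dots> = s * (t - 3)" using j\<^sub>0(1) by simp
  finally show ?thesis .
qed

lemma card_windows_containing_edge_le:
  assumes "3 \<le> t" and "t \<le> d" and "Ch \<subseteq> fan_chords t"
    and "card (spoke_offsets t Ch) \<le> s * (t - 3) + 1" and "e \<in> gwheel_edges d s"
  shows "card {i\<in>{..<s} \<times> {..<d}. e \<in> window d t Ch i} \<le> s * (t - 2)"
  using assms(5)
proof (cases rule: gwheel_edge_cases)
  case (1 h y)
  have "t - 2 = Suc (t - 3)" using assms(1) by simp
  then have "s * (t - 3) + 1 \<le> s * (t - 2)" using \<open>h < s\<close> by simp
  then show ?thesis
    using card_windows_containing_spoke_le[OF assms(1-3), of s h y] assms(4) unfolding 1(3) by linarith
next
  case (2 a)
  then show ?thesis using card_windows_containing_rim_edge_le[OF assms(1-3)] by simp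
qed

lemma card_windows_containing_two_edges_le:
  assumes "3 \<le> t" and "2 * t \<le> d" and "Ch \<subseteq> fan_chords t"
    and "card (spoke_offsets t Ch) \<le> s * (t - 3) + 1"
    and "e \<in> gwheel_edges d s" and "e' \<in> gwheel_edges d s" and "e \<noteq> e'"
  shows "card {i\<in>{..<s} \<times> {..<d}. e \<in> window d t Ch i \<and> e' \<in> window d t Ch i} \<le> s * (t - 3)"
proof -
  have spoke_and_edge: "card {i\<in>{..<s} \<times> {..<d}. spoke h y \<in> window d t Ch i \<and> e \<in> window d t Ch i}
      \<le> s * (t - 3)"
    if "e \<in> gwheel_edges d s" "e \<noteq> spoke h y" "y < d" for e h y
    using card_windows_containing_spoke_and_edge_le[OF assms(1-3) that(3,1,2)] assms(4) by linarith
  show ?thesis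
  proof (cases rule: gwheel_edge_cases[OF assms(5)])
    case (1 h y)
    then show ?thesis using spoke_and_edge[OF assms(6)] assms(7) by blast
  next
    case e: (2 a)
    show ?thesis
    proof (cases rule: gwheel_edge_cases[OF assms(6)])
      case (1 h y)
      then have "card {i\<in>{..<s} \<times> {..<d}. e' \<in> window d t Ch i \<and> e \<in> window d t Ch i} \<le> s * (t - 3)"
        using spoke_and_edge[OF assms(5)] assms(7) by blast
      then show ?thesis by (simp add: conj_commute)
    next
      case e': (2 b)
      with e assms(7) have "a \<noteq> b" by auto
      from card_windows_containing_two_rim_edges_le[OF assms(1-3) e(1) e'(1) this]
      show ?thesis unfolding e(2) e'(2) .
    qed
  qed
qed

lemma le_colour_deficit_if_no_rainbow_copy:
  assumes "5 \<le> t" and "2 * t \<le> d" and "1 \<le> s" and "Ch \<subseteq> fan_chords t"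
    and "card (spoke_offsets t Ch) \<le> s * (t - 3) + 1" and "s = 1 \<or> 6 \<le> t"
    and "\<not> has_rainbow_copy (gwheel_edges d s) c {0..<t} (cycle_edges t \<union> Ch)"
  shows "d \<le> (t - 3) * (card (gwheel_edges d s) - card (c ` gwheel_edges d s))"
proof -
  let ?E = "gwheel_edges d s" and ?I = "{..<s} \<times> {..<d}" and ?W = "window d t Ch"
  have "3 \<le> t" "t \<le> d" "0 < d" using assms(1,2) by simp_all
  obtain u where t: "t = u + 5" using assms(1) by (metis add.commute le_Suc_ex)
  have "s \<le> s * u + 1"
  proof (cases "s = 1")
    case False
    then have "1 \<le> u" using assms(6) t by simp
    then have "s * 1 \<le> s * u" by (rule mult_le_mono2)
    then show ?thesis by linarith
  qed simp
  then have multiplicities: "3 * (s * (t - 2)) \<le> 4 * (s * (t - 3)) + 1" "s * (t - 2) \<le> 2 * (s * (t - 3))"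
    by (simp_all add: t algebra_simps)
  have "card ?I \<le> s * (t - 3) * (card ?E - card (c ` ?E))"
  proof (rule card_non_injective_windows_le[OF _ _ _ _ _ _ multiplicities])
    show "finite ?I" "finite ?E" by (simp_all add: finite_gwheel_edges)
    show "?W i \<subseteq> ?E" if "i \<in> ?I" for i
      using that window_subset_gwheel_edges[OF \<open>3 \<le> t\<close> assms(4) _ \<open>0 < d\<close>] by auto
    show "\<not> inj_on c (?W i)" if "i \<in> ?I" for i
      using that has_rainbow_copy_if_inj_on_window[OF \<open>3 \<le> t\<close> \<open>t \<le> d\<close> assms(4)] assms(7) by auto
  qed (use card_windows_containing_edge_le[OF \<open>3 \<le> t\<close> \<open>t \<le> d\<close> assms(4,5)]
      card_windows_containing_two_edges_le[OF \<open>3 \<le> t\<close> assms(2,4,5)] in simp_all)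
  then have "s * d \<le> s * ((t - 3) * (card ?E - card (c ` ?E)))"
    by (simp add: card_cartesian_product mult.assoc)
  then show ?thesis using assms(3) by simp
qed

lemma has_rainbow_copy_if_many_colours:
  assumes "5 \<le> t" and "2 * t \<le> d" and "1 \<le> s" and "Ch \<subseteq> fan_chords t"
    and "card (spoke_offsets t Ch) \<le> s * (t - 3) + 1" and "s = 1 \<or> 6 \<le> t"
    and "\<lfloor>(real (s + 1) * (real t - 3) - 1) / (real t - 3) * real d\<rfloor> + 1 \<le> int (card (c ` gwheel_edges d s))"
  shows "has_rainbow_copy (gwheel_edges d s) c {0..<t} (cycle_edges t \<union> Ch)"
proof (rule ccontr)
  let ?E = "gwheel_edges d s"
  let ?k = "card (c ` ?E)"
  assume "\<not> has_rainbow_copy ?E c {0..<t} (cycle_edges t \<union> Ch)"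
  with le_colour_deficit_if_no_rainbow_copy[OF assms(1-6)]
  have "real d \<le> real (t - 3) * real (card ?E - ?k)" by (metis of_nat_le_iff of_nat_mult)
  also have "\<dots> = (real t - 3) * (real (card ?E) - real ?k)"
    using assms(1) by (simp add: of_nat_diff card_image_le[OF finite_gwheel_edges])
  also have "\<dots> \<le> (real t - 3) * (real (s + 1) * real d - real ?k)"
  proof -
    have "real (card ?E) \<le> real (s + 1) * real d"
      using card_gwheel_edges_le[of d s] by (metis of_nat_le_iff of_nat_mult)
    then show ?thesis using assms(1) by (intro mult_left_mono) auto
  qed
  finally have "real ?k \<le> (real (s + 1) * (real t - 3) - 1) / (real t - 3) * real d"
    using assms(1) by (simp add: field_simps)
  then have "int ?k \<le> \<lfloor>(real (s + 1) * (real t - 3) - 1) / (real t - 3) * real d\<rfloor>"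
    by (simp add: le_floor_iff)
  with assms(7) show False by simp
qed

lemma has_rainbow_copy_mono:
  assumes "has_rainbow_copy E c V H'" and "H \<subseteq> H'"
  shows "has_rainbow_copy E c V H"
  using assms unfolding has_rainbow_copy_def by (meson inj_on_subset subsetD)

lemma card_fan_chords: "card (fan_chords t) = t - 3"
proof -
  have "fan_chords t = (\<lambda>i. {0, i}) ` {2..t - 2}" unfolding fan_chords_def by auto
  moreover have "inj_on (\<lambda>i. {0::nat, i}) {2..t - 2}" by (auto simp: inj_on_def doubleton_eq_iff)
  ultimately show ?thesis by (simp add: card_image)
qed

lemma has_rainbow_fan_if_many_colours:
  assumes "(s = 2 \<and> 6 \<le> t) \<or> (3 \<le> s \<and> 7 \<le> t)" and "2 * t \<le> d"
    and "\<lfloor>(real ((s + 1) * t) - real (3 * s + 4)) / (real t - 3) * real d\<rfloor> + 1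
      \<le> int (card (c ` gwheel_edges d s))"
  shows "has_rainbow_copy (gwheel_edges d s) c {0..<t} (fan_edges t)"
  unfolding fan_edges_def
proof (rule has_rainbow_copy_if_many_colours[OF _ assms(2) _ subset_refl])
  show "5 \<le> t" "1 \<le> s" "s = 1 \<or> 6 \<le> t" using assms(1) by auto
  show "card (spoke_offsets t (fan_chords t)) \<le> s * (t - 3) + 1"
    using card_spoke_offsets_le[of t "fan_chords t"] mult_le_mono1[of 2 s "t - 3"] assms(1) by linarith
  have "real ((s + 1) * t) - real (3 * s + 4) = real (s + 1) * (real t - 3) - 1"
    by (simp add: algebra_simps)
  from assms(3)[unfolded this] show "\<lfloor>(real (s + 1) * (real t - 3) - 1) / (real t - 3) * real d\<rfloor> + 1
      \<le> int (card (c ` gwheel_edges d s))" .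
qed

lemma Theta_class_misses_a_chord:
  assumes "\<theta> \<in> Theta_class t l" and "l + 4 \<le> t"
  obtains ch where "ch \<in> fan_chords t" and "\<theta> \<subseteq> cycle_edges t \<union> (fan_chords t - {ch})"
proof -
  obtain C where C: "\<theta> = cycle_edges t \<union> C" "C \<subseteq> fan_chords t" "card C = l"
    using assms(1) unfolding Theta_class_def by blast
  have "card C < card (fan_chords t)" using C(3) assms(2) by (simp add: card_fan_chords)
  moreover from this have "finite C" using C(2) finite_subset card.infinite by fastforce
  ultimately have "\<not> fan_chords t \<subseteq> C" using card_mono leD by blast
  then obtain ch where "ch \<in> fan_chords t" "ch \<notin> C" by blast
  with C show thesis using that by blast
qed

lemma has_rainbow_Theta_if_many_colours:
  assumes "\<theta> \<in> Theta_class t l" and "5 \<le> t" and "l + 4 \<le> t" and "2 * t \<le> d"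
    and "\<lfloor>(2 * real t - 7) / (real t - 3) * real d\<rfloor> + 1 \<le> int (card (c ` gwheel_edges d 1))"
  shows "has_rainbow_copy (gwheel_edges d 1) c {0..<t} \<theta>"
proof -
  obtain ch where ch: "ch \<in> fan_chords t" "\<theta> \<subseteq> cycle_edges t \<union> (fan_chords t - {ch})"
    using assms(1,3) by (rule Theta_class_misses_a_chord)
  have "has_rainbow_copy (gwheel_edges d 1) c {0..<t} (cycle_edges t \<union> (fan_chords t - {ch}))"
  proof (rule has_rainbow_copy_if_many_colours[OF assms(2,4) order_refl])
    show "card (spoke_offsets t (fan_chords t - {ch})) \<le> 1 * (t - 3) + 1"
      using card_spoke_offsets_remove_chord_le[OF _ ch(1), of "fan_chords t"] assms(2) by simp
    have "2 * real t - 7 = real (1 + 1) * (real t - 3) - 1" by simp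
    from assms(5)[unfolded this] show "\<lfloor>(real (1 + 1) * (real t - 3) - 1) / (real t - 3) * real d\<rfloor> + 1
        \<le> int (card (c ` gwheel_edges d 1))" .
  qed (simp_all add: Diff_subset)
  then show ?thesis using ch(2) by (rule has_rainbow_copy_mono)
qed

theorem theorem3p2:
  fixes d s t l :: nat
  assumes "s \<ge> 1" and "d \<ge> 3 * t - 5" and "t \<ge> max 5 (l + 4)"
  shows
    "((s = 2 \<and> t \<ge> 6) \<or> (s \<ge> 3 \<and> t \<ge> 7) \<longrightarrow>
       (\<forall>c :: (nat + nat) set \<Rightarrow> nat.
          int (card (c ` gwheel_edges d s)) \<ge>
            \<lfloor>(real ((s + 1) * t) - real (3 * s + 4)) / (real t - 3) * real d\<rfloor> + 1
          \<longrightarrow> has_rainbow_copy (gwheel_edges d s) c {0..<t} (fan_edges t)))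
     \<and>
     (\<forall>\<theta> \<in> Theta_class t l. \<forall>c :: (nat + nat) set \<Rightarrow> nat.
          int (card (c ` gwheel_edges d 1)) \<ge>
            \<lfloor>(2 * real t - 7) / (real t - 3) * real d\<rfloor> + 1
          \<longrightarrow> has_rainbow_copy (gwheel_edges d 1) c {0..<t} \<theta>)"
proof -
  have t: "5 \<le> t" "l + 4 \<le> t" and d: "2 * t \<le> d" using assms(2,3) by auto
  show ?thesis
    using has_rainbow_fan_if_many_colours[OF _ d] has_rainbow_Theta_if_many_colours[OF _ t d]
    by (intro conjI impI allI ballI) simp_all
qed

end
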